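(* Let $f\colon X\to X$ be a homeomorphism of a connected compact metric space $(X,\operatorname{dist})$. Let $D\colon X^3_{\delta_0}\to\mathbb{R}$ be a catenary local metric which is locally minimizing with constant $\delta\in(0,\delta_0)$. Define $\rho(x,y)=\inf_{n\ge2}\ \inf_{a\in C^\delta_n(x,y)}\ \sum_{i=1}^{n-1}D_{a_i}(a_i,a_{i+1})$. Then $\rho$ is a catenary metric on $X$.
   Context: Let $X^3_\delta=\{(x,y,z)\in X^3:y,z\in B_\delta(x)\}$, where $B_\delta(x)$ is the open ball of radius $\delta$. A local metric is a continuous $D\colon X^3_{\delta_0}\to\mathbb{R}$, written $D_x(y,z)$, such that each $D_x$ is a metric on $B_{\delta_0}(x)$ and $D_x(x,y)=D_y(x,y)$ whenever $\operatorname{dist}(x,y)<\delta_0$. $D$ is catenary if $D_{f(x)}(f(y),f(z))-2D_x(y,z)+D_{f^{-1}(x)}(f^{-1}(y),f^{-1}(z))=D_x(y,z)$ whenever all terms are defined. $D$ is locally minimizing with constant $\delta$ if $\operatorname{dist}(x,y)<\delta$ implies $D_x(x,y)\le D_z(x,y)$ for all $z\in B_\delta(x)\cap B_\delta(y)$. $C^\delta_n(x,y)=\{a=(a_1,\dots,a_n)\in X^n: a_1=x,\ a_n=y,\ \operatorname{dist}(a_i,a_{i+1})\le\delta \text{ for } i=1,\dots,n-1\}$. A catenary metric is a metric $\rho$ on $X$ defining its topology for which there is $\delta'>0$ such that $\rho(f(x),f(y))-2\rho(x,y)+\rho(f^{-1}(x),f^{-1}(y))=\rho(x,y)$ whenever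 $\operatorname{dist}(x,y)\le\delta'$. *)

theory Defs
  imports "HOL-Analysis.Analysis"
begin

definition triples :: "real \<Rightarrow> ('a::metric_space \<times> 'a \<times> 'a) set" where
  "triples \<delta> = {(x,y,z). dist x y < \<delta> \<and> dist x z < \<delta>}"

definition is_metric_on :: "'a set \<Rightarrow> ('a \<Rightarrow> 'a \<Rightarrow> real) \<Rightarrow> bool" where
  "is_metric_on S d \<longleftrightarrow>
     (\<forall>y\<in>S. \<forall>z\<in>S. d y z \<ge> 0 \<and> (d y z = 0 \<longleftrightarrow> y = z) \<and> d y z = d z y) \<and>
     (\<forall>y\<in>S. \<forall>z\<in>S. \<forall>w\<in>S. d y w \<le> d y z + d z w)"

text \<open>Local metric D : X^3_{delta0} -> R, written D x y z = D_x(y,z).\<close>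
definition local_metric :: "real \<Rightarrow> ('a::metric_space \<Rightarrow> 'a \<Rightarrow> 'a \<Rightarrow> real) \<Rightarrow> bool" where
  "local_metric \<delta>0 D \<longleftrightarrow>
     continuous_on (triples \<delta>0) (\<lambda>(x,y,z). D x y z) \<and>
     (\<forall>x. is_metric_on (ball x \<delta>0) (D x)) \<and>
     (\<forall>x y. dist x y < \<delta>0 \<longrightarrow> D x x y = D y x y)"

text \<open>Catenary local metric w.r.t. f with inverse g, whenever all terms are defined.\<close>
definition catenary_local :: "real \<Rightarrow> ('a::metric_space \<Rightarrow> 'a) \<Rightarrow> ('a \<Rightarrow> 'a) \<Rightarrow> ('a \<Rightarrow> 'a \<Rightarrow> 'a \<Rightarrow> real) \<Rightarrow> bool" where
  "catenary_local \<delta>0 f g D \<longleftrightarrow>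
     (\<forall>x y z. (x,y,z) \<in> triples \<delta>0 \<and> (f x, f y, f z) \<in> triples \<delta>0 \<and> (g x, g y, g z) \<in> triples \<delta>0 \<longrightarrow>
        D (f x) (f y) (f z) - 2 * D x y z + D (g x) (g y) (g z) = D x y z)"

definition locally_minimizing :: "real \<Rightarrow> ('a::metric_space \<Rightarrow> 'a \<Rightarrow> 'a \<Rightarrow> real) \<Rightarrow> bool" where
  "locally_minimizing \<delta> D \<longleftrightarrow>
     (\<forall>x y. dist x y < \<delta> \<longrightarrow> (\<forall>z \<in> ball x \<delta> \<inter> ball y \<delta>. D x x y \<le> D z x y))"

text \<open>C^delta_n(x,y): chains a = (a_1..a_n), represented as lists of length n (0-indexed).\<close>
definition chains :: "real \<Rightarrow> nat \<Rightarrow> 'a::metric_space \<Rightarrow> 'a \<Rightarrow> 'a list set" where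
  "chains \<delta> n x y = {a. length a = n \<and> a ! 0 = x \<and> a ! (n - 1) = y \<and>
       (\<forall>i < n - 1. dist (a ! i) (a ! (i + 1)) \<le> \<delta>)}"

definition chain_length :: "('a \<Rightarrow> 'a \<Rightarrow> 'a \<Rightarrow> real) \<Rightarrow> 'a list \<Rightarrow> real" where
  "chain_length D a = (\<Sum>i < length a - 1. D (a ! i) (a ! i) (a ! (i + 1)))"

definition rho :: "real \<Rightarrow> ('a::metric_space \<Rightarrow> 'a \<Rightarrow> 'a \<Rightarrow> real) \<Rightarrow> 'a \<Rightarrow> 'a \<Rightarrow> real" where
  "rho \<delta> D x y = Inf {chain_length D a | a n. n \<ge> 2 \<and> a \<in> chains \<delta> n x y}"

definition metric_defining_topology :: "('a::metric_space \<Rightarrow> 'a \<Rightarrow> real) \<Rightarrow> bool" where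
  "metric_defining_topology r \<longleftrightarrow> is_metric_on UNIV r \<and>
     (\<forall>U. open U \<longleftrightarrow> (\<forall>x\<in>U. \<exists>e>0. \<forall>y. r x y < e \<longrightarrow> y \<in> U))"

definition catenary_metric :: "('a::metric_space \<Rightarrow> 'a) \<Rightarrow> ('a \<Rightarrow> 'a) \<Rightarrow> ('a \<Rightarrow> 'a \<Rightarrow> real) \<Rightarrow> bool" where
  "catenary_metric f g r \<longleftrightarrow> metric_defining_topology r \<and>
     (\<exists>\<delta>'>0. \<forall>x y. dist x y \<le> \<delta>' \<longrightarrow> r (f x) (f y) - 2 * r x y + r (g x) (g y) = r x y)"

end

theory Submission imports Defs begin

text \<open>
  Write \<open>d(x,y) = D\<^sub>x(x,y)\<close>. At scales below \<open>\<delta>\<close> the local metric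
  axioms together with local minimality make \<open>d\<close> satisfy the triangle inequality,
  so a \<open>\<delta>\<close>-chain between points at distance less than \<open>\<delta>/4\<close> either costs at least
  \<open>d(x,y)\<close> or leaves the \<open>\<delta>/4\<close>-ball, and by compactness the latter costs at least
  a fixed \<open>L > 0\<close>. Hence \<open>\<rho> = d\<close> near the diagonal, where \<open>d\<close> is catenary; this
  also gives positivity and equivalence with \<open>dist\<close>, while connectedness makes
  every pair of points joinable by a \<open>\<delta>\<close>-chain, so the infimum is finite.
\<close>

inductive chain_cost :: "real \<Rightarrow> ('a::metric_space \<Rightarrow> 'a \<Rightarrow> 'a \<Rightarrow> real) \<Rightarrow> 'a \<Rightarrow> 'a \<Rightarrow> real \<Rightarrow> bool"
  for \<delta> D where
  single: "dist x y \<le> \<delta> \<Longrightarrow> chain_cost \<delta> D x y (D x x y)"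
| snoc: "chain_cost \<delta> D x y c \<Longrightarrow> dist y z \<le> \<delta> \<Longrightarrow> chain_cost \<delta> D x z (c + D y y z)"

lemma chain_length_snoc:
  assumes "a \<noteq> []"
  shows "chain_length D (a @ [z]) = chain_length D a + D (last a) (last a) z"
proof -
  obtain m where m: "length a = Suc m" using assms by (cases a) auto
  have "chain_length D (a @ [z]) = (\<Sum>i<m. D (a ! i) (a ! i) (a ! (i + 1))) + D (a ! m) (a ! m) z"
    unfolding chain_length_def using m by (simp add: nth_append)
  also have "(\<Sum>i<m. D (a ! i) (a ! i) (a ! (i + 1))) = chain_length D a"
    unfolding chain_length_def using m by simp
  finally show ?thesis using m assms by (simp add: last_conv_nth)
qed

lemma chain_cost_chain_length:
  assumes "2 \<le> length a" and "\<forall>i < length a - 1. dist (a ! i) (a ! (i + 1)) \<le> \<delta>"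
  shows "chain_cost \<delta> D (hd a) (last a) (chain_length D a)"
  using assms
proof (induction a rule: rev_induct)
  case Nil
  then show ?case by simp
next
  case (snoc z a)
  have a_ne: "a \<noteq> []" using snoc.prems(1) by auto
  have last_step: "dist (last a) z \<le> \<delta>"
    using snoc.prems(2)[rule_format, of "length a - 1"] a_ne by (simp add: nth_append last_conv_nth)
  show ?case
  proof (cases "length a = 1")
    case True
    then obtain x where "a = [x]" by (auto simp: length_Suc_conv)
    with last_step show ?thesis by (auto simp: chain_length_def intro: chain_cost.single)
  next
    case False
    have "\<forall>i < length a - 1. dist (a ! i) (a ! (i + 1)) \<le> \<delta>"
    proof (intro allI impI)
      fix i assume "i < length a - 1"
      then have "i < length a" "i + 1 < length a" by auto
      then show "dist (a ! i) (a ! (i + 1)) \<le> \<delta>"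
        using snoc.prems(2)[rule_format, of i] by (simp add: nth_append)
    qed
    then have "chain_cost \<delta> D (hd a) (last a) (chain_length D a)"
      using snoc.IH snoc.prems(1) False by simp
    from chain_cost.snoc[OF this last_step] show ?thesis
      using a_ne by (simp add: chain_length_snoc)
  qed
qed

lemma chain_cost_imp_chain:
  "chain_cost \<delta> D x y c \<Longrightarrow> \<exists>a. 2 \<le> length a \<and> a \<in> chains \<delta> (length a) x y \<and> chain_length D a = c"
proof (induction rule: chain_cost.induct)
  case (single x y)
  show ?case
    by (rule exI[of _ "[x, y]"]) (use single in \<open>auto simp: chains_def chain_length_def\<close>)
next
  case (snoc x y c z)
  then obtain a where a: "2 \<le> length a" "a \<in> chains \<delta> (length a) x y" "chain_length D a = c"
    by blast
  have a_ne: "a \<noteq> []" using a(1) by auto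
  then have last_a: "last a = y" using a(2) by (simp add: chains_def last_conv_nth)
  have "dist ((a @ [z]) ! i) ((a @ [z]) ! (i + 1)) \<le> \<delta>" if "i < length a" for i
  proof (cases "i = length a - 1")
    case True
    then show ?thesis using snoc.hyps(2) last_a a_ne by (simp add: nth_append last_conv_nth)
  next
    case False
    then show ?thesis using a(2) that by (auto simp: chains_def nth_append)
  qed
  then have "a @ [z] \<in> chains \<delta> (length (a @ [z])) x z"
    using a a_ne by (auto simp: chains_def nth_append)
  then show ?case
    using a a_ne last_a by (intro exI[of _ "a @ [z]"]) (simp add: chain_length_snoc)
qed

lemma rho_eq_Inf_chain_cost: "rho \<delta> D x y = Inf {c. chain_cost \<delta> D x y c}"
proof -
  have "chain_cost \<delta> D x y (chain_length D a)" if "a \<in> chains \<delta> n x y" "2 \<le> n" for a n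
  proof -
    have "a \<noteq> []" using that by (auto simp: chains_def)
    then show ?thesis
      using that chain_cost_chain_length[of a \<delta> D] by (auto simp: chains_def hd_conv_nth last_conv_nth)
  qed
  then have "{chain_length D a | a n. 2 \<le> n \<and> a \<in> chains \<delta> n x y} = {c. chain_cost \<delta> D x y c}"
    using chain_cost_imp_chain by blast
  then show ?thesis unfolding rho_def by simp
qed

locale local_metric_scale =
  fixes D :: "'a::metric_space \<Rightarrow> 'a \<Rightarrow> 'a \<Rightarrow> real" and \<delta>0 \<delta> :: real
  assumes local_metric: "local_metric \<delta>0 D"
    and scale_pos: "0 < \<delta>" and scale_less: "\<delta> < \<delta>0"
begin

lemma D_metric: "is_metric_on (ball x \<delta>0) (D x)"
  using local_metric unfolding local_metric_def by blast

lemma D_base_change: "dist x y < \<delta>0 \<Longrightarrow> D x x y = D y x y"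
  using local_metric unfolding local_metric_def by blast

lemma D_self [simp]: "D x x x = 0"
  using D_metric[of x] scale_pos scale_less unfolding is_metric_on_def by auto

lemma D_nonneg: "dist x y < \<delta>0 \<Longrightarrow> 0 \<le> D x x y"
  using D_metric[of x] scale_pos scale_less unfolding is_metric_on_def by (auto simp: dist_commute)

lemma D_pos: "x \<noteq> y \<Longrightarrow> dist x y < \<delta>0 \<Longrightarrow> 0 < D x x y"
  using D_nonneg[of x y] D_metric[of x] scale_pos scale_less unfolding is_metric_on_def
  by (auto simp: dist_commute order_less_le)

lemma D_commute: "dist x y < \<delta>0 \<Longrightarrow> D y y x = D x x y"
  using D_metric[of y] D_base_change[of x y] scale_pos scale_less unfolding is_metric_on_def
  by (auto simp: dist_commute)

lemma D_triangle: "dist y x < \<delta>0 \<Longrightarrow> dist y z < \<delta>0 \<Longrightarrow> D y x z \<le> D y x y + D y y z"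
  using D_metric[of y] scale_pos scale_less unfolding is_metric_on_def by auto

lemma chain_cost_nonneg: "chain_cost \<delta> D x y c \<Longrightarrow> 0 \<le> c"
  by (induction rule: chain_cost.induct) (use scale_less in \<open>auto intro!: D_nonneg add_nonneg_nonneg\<close>)

lemma chain_cost_trans:
  "chain_cost \<delta> D y z c' \<Longrightarrow> chain_cost \<delta> D x y c \<Longrightarrow> chain_cost \<delta> D x z (c + c')"
proof (induction arbitrary: c rule: chain_cost.induct)
  case (single y z)
  then show ?case using chain_cost.snoc by blast
next
  case (snoc y w c' z)
  from chain_cost.snoc[OF snoc.IH[OF snoc.prems] snoc.hyps(2)] show ?case
    by (simp add: add.assoc)
qed

lemma chain_cost_sym: "chain_cost \<delta> D x y c \<Longrightarrow> chain_cost \<delta> D y x c"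
proof (induction rule: chain_cost.induct)
  case (single x y)
  then have "chain_cost \<delta> D y x (D y y x)" by (simp add: chain_cost.single dist_commute)
  then show ?case using D_commute[of x y] single scale_less by simp
next
  case (snoc x y c z)
  have "chain_cost \<delta> D z y (D z z y)" using snoc.hyps(2) by (simp add: chain_cost.single dist_commute)
  from chain_cost_trans[OF snoc.IH this] show ?case
    using D_commute[of y z] snoc.hyps(2) scale_less by (simp add: add.commute)
qed

lemma continuous_on_D_diag:
  "continuous_on {p. dist (fst p) (snd p) < \<delta>0} (\<lambda>p. D (fst p) (fst p) (snd p))"
proof -
  have "continuous_on (triples \<delta>0) (\<lambda>(x, y, z). D x y z)"
    using local_metric unfolding local_metric_def by blast
  moreover have "(\<lambda>p. (fst p, fst p, snd p)) ` {p. dist (fst p) (snd p) < \<delta>0} \<subseteq> triples \<delta>0"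
    unfolding triples_def using scale_pos scale_less by auto
  ultimately have "continuous_on {p. dist (fst p) (snd p) < \<delta>0}
      ((\<lambda>(x, y, z). D x y z) \<circ> (\<lambda>p. (fst p, fst p, snd p)))"
    by (intro continuous_on_compose continuous_intros) (rule continuous_on_subset)
  then show ?thesis by (simp add: o_def case_prod_unfold)
qed

lemma D_diag_triangle:
  assumes "locally_minimizing \<delta> D"
    and "dist x z < \<delta>" "dist x y < \<delta>" "dist y z < \<delta>"
  shows "D x x z \<le> D x x y + D y y z"
proof -
  have "D x x z \<le> D y x z"
    using assms unfolding locally_minimizing_def by (auto simp: dist_commute)
  also have "\<dots> \<le> D y x y + D y y z"
    using assms scale_less by (intro D_triangle) (auto simp: dist_commute)
  also have "D y x y = D x x y"
    using assms scale_less by (intro D_base_change[symmetric]) auto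
  finally show ?thesis .
qed

end

locale chain_metric_space = local_metric_scale D \<delta>0 \<delta>
  for D :: "'a::metric_space \<Rightarrow> 'a \<Rightarrow> 'a \<Rightarrow> real" and \<delta>0 \<delta> +
  assumes compact_space: "compact (UNIV :: 'a set)"
    and connected_space: "connected (UNIV :: 'a set)"
    and minimizing: "locally_minimizing \<delta> D"
begin

lemma chain_cost_exists: "\<exists>c. chain_cost \<delta> D x y c"
proof -
  define A where "A = {y. \<exists>c. chain_cost \<delta> D x y c}"
  have "x \<in> A" unfolding A_def using chain_cost.single[of x x \<delta> D] scale_pos by auto
  moreover have "z \<in> A \<longleftrightarrow> y \<in> A" if "dist y z < \<delta>" for y z
    using that chain_cost.snoc[of \<delta> D x y _ z] chain_cost.snoc[of \<delta> D x z _ y]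
    unfolding A_def by (auto simp: dist_commute)
  then have "open A" "open (- A)"
    unfolding open_dist using scale_pos by (metis ComplD ComplI)+
  ultimately have "A = UNIV"
    using connected_space unfolding connected_def by blast
  then show ?thesis unfolding A_def by blast
qed

lemma compact_closed_pairs: "closed S \<Longrightarrow> compact (S :: ('a \<times> 'a) set)"
  using compact_Int_closed[OF compact_Times[OF compact_space compact_space]] by simp

lemma D_lower_bound_annulus:
  assumes "0 < \<epsilon>"
  shows "\<exists>L>0. \<forall>z w. \<epsilon> \<le> dist z w \<and> dist z w \<le> \<delta> \<longrightarrow> L \<le> D z z w"
proof -
  define K where "K = {p :: 'a \<times> 'a. \<epsilon> \<le> dist (fst p) (snd p) \<and> dist (fst p) (snd p) \<le> \<delta>}"
  have "compact K" unfolding K_def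
    by (intro compact_closed_pairs closed_Collect_conj closed_Collect_le continuous_intros)
  have K_sub: "K \<subseteq> {p. dist (fst p) (snd p) < \<delta>0}" unfolding K_def using scale_less by auto
  show ?thesis
  proof (cases "K = {}")
    case True
    then show ?thesis unfolding K_def by (intro exI[of _ 1]) auto
  next
    case False
    obtain p where p: "p \<in> K" "\<forall>q\<in>K. D (fst p) (fst p) (snd p) \<le> D (fst q) (fst q) (snd q)"
      using continuous_attains_inf[OF \<open>compact K\<close> False continuous_on_subset[OF continuous_on_D_diag K_sub]]
      by blast
    have "0 < D (fst p) (fst p) (snd p)"
      using p(1) assms scale_less unfolding K_def by (intro D_pos) auto
    with p(2) show ?thesis unfolding K_def by (intro exI[of _ "D (fst p) (fst p) (snd p)"]) auto
  qed
qed

lemma D_small_near_diagonal: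
  assumes "0 < e"
  shows "\<exists>\<eta>>0. \<forall>x y. dist x y < \<eta> \<longrightarrow> D x x y < e"
proof -
  define C where "C = {p :: 'a \<times> 'a. dist (fst p) (snd p) \<le> \<delta>}"
  have "compact C" unfolding C_def
    by (intro compact_closed_pairs closed_Collect_le continuous_intros)
  moreover have "C \<subseteq> {p. dist (fst p) (snd p) < \<delta>0}" unfolding C_def using scale_less by auto
  ultimately have "uniformly_continuous_on C (\<lambda>p. D (fst p) (fst p) (snd p))"
    by (intro compact_uniformly_continuous continuous_on_subset[OF continuous_on_D_diag])
  then obtain d where d: "d > 0" "\<forall>p\<in>C. \<forall>q\<in>C. dist q p < d \<longrightarrow>
      dist (D (fst q) (fst q) (snd q)) (D (fst p) (fst p) (snd p)) < e"
    unfolding uniformly_continuous_on_def using assms by blast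
  show ?thesis
  proof (intro exI[of _ "min d \<delta>"] conjI allI impI)
    show "0 < min d \<delta>" using d scale_pos by simp
    fix x y :: 'a assume xy: "dist x y < min d \<delta>"
    have "(x, x) \<in> C" "(x, y) \<in> C" unfolding C_def using xy scale_pos by auto
    moreover have "dist (x, y) (x, x) < d" using xy by (simp add: dist_Pair_Pair dist_commute)
    ultimately have "dist (D x x y) (D x x x) < e" using d(2) by fastforce
    then show "D x x y < e" by (simp add: dist_real_def)
  qed
qed

text \<open>While a chain stays within \<open>\<delta>/4\<close> of its start, a step shorter than \<open>\<delta>/2\<close>
  keeps it comparable to \<open>d\<close> by local minimality; a longer step, or leaving
  the \<open>\<delta>/4\<close>-ball, already costs \<open>L\<close>.\<close>
lemma chain_cost_short_or_large:
  assumes L: "\<forall>z w. \<delta>/4 \<le> dist z w \<and> dist z w \<le> \<delta> \<longrightarrow> L \<le> D z z w"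
  shows "chain_cost \<delta> D x y c \<Longrightarrow> (dist x y < \<delta>/4 \<and> D x x y \<le> c) \<or> L \<le> c"
proof (induction rule: chain_cost.induct)
  case (single x y)
  then show ?case using L by force
next
  case (snoc x y c z)
  have "0 \<le> D y y z" using snoc.hyps(2) scale_less by (intro D_nonneg) auto
  show ?case
  proof (cases "L \<le> c")
    case True
    then show ?thesis using \<open>0 \<le> D y y z\<close> by simp
  next
    case False
    with snoc.IH have xy: "dist x y < \<delta>/4" "D x x y \<le> c" by auto
    show ?thesis
    proof (cases "dist y z < \<delta>/2")
      case True
      have "dist x z < 3 * \<delta>/4" using xy(1) True dist_triangle[of x z y] by linarith
      moreover have "D x x z \<le> c + D y y z"
        using D_diag_triangle[OF minimizing, of x z y] xy True \<open>dist x z < 3 * \<delta>/4\<close> scale_pos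
        by linarith
      moreover have "L \<le> D x x z" if "\<delta>/4 \<le> dist x z"
        using L that \<open>dist x z < 3 * \<delta>/4\<close> by auto
      ultimately show ?thesis by (meson not_le order_trans)
    next
      case False
      then have "L \<le> D y y z" using L snoc.hyps(2) scale_pos by auto
      then show ?thesis using chain_cost_nonneg[OF snoc.hyps(1)] by simp
    qed
  qed
qed

lemma rho_le: "chain_cost \<delta> D x y c \<Longrightarrow> rho \<delta> D x y \<le> c"
  unfolding rho_eq_Inf_chain_cost
  by (rule cInf_lower) (auto intro: bdd_belowI chain_cost_nonneg)

lemma rho_greatest: "(\<And>c. chain_cost \<delta> D x y c \<Longrightarrow> B \<le> c) \<Longrightarrow> B \<le> rho \<delta> D x y"
  unfolding rho_eq_Inf_chain_cost by (rule cInf_greatest) (use chain_cost_exists in auto)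

lemma rho_nonneg: "0 \<le> rho \<delta> D x y"
  by (rule rho_greatest) (rule chain_cost_nonneg)

lemma rho_self: "rho \<delta> D x x = 0"
  using rho_le[OF chain_cost.single[of x x]] rho_nonneg[of x x] scale_pos by simp

lemma rho_commute: "rho \<delta> D x y = rho \<delta> D y x"
proof -
  have "Collect (chain_cost \<delta> D x y) = Collect (chain_cost \<delta> D y x)"
    using chain_cost_sym by blast
  then show ?thesis unfolding rho_eq_Inf_chain_cost by simp
qed

lemma rho_triangle: "rho \<delta> D x z \<le> rho \<delta> D x y + rho \<delta> D y z"
proof -
  have "rho \<delta> D x z - c' \<le> rho \<delta> D x y" if "chain_cost \<delta> D y z c'" for c'
    using rho_le[OF chain_cost_trans[OF that]] by (intro rho_greatest) force
  then have "rho \<delta> D x z - rho \<delta> D x y \<le> rho \<delta> D y z"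
    by (intro rho_greatest) force
  then show ?thesis by simp
qed

lemma rho_bounded_below:
  assumes "0 < \<epsilon>"
  shows "\<exists>e>0. \<forall>x y. \<epsilon> \<le> dist x y \<longrightarrow> e \<le> rho \<delta> D x y"
proof -
  obtain L where L: "L > 0" "\<forall>z w. min \<epsilon> (\<delta>/4) \<le> dist z w \<and> dist z w \<le> \<delta> \<longrightarrow> L \<le> D z z w"
    using D_lower_bound_annulus[of "min \<epsilon> (\<delta>/4)"] assms scale_pos by auto
  have "L \<le> rho \<delta> D x y" if "\<epsilon> \<le> dist x y" for x y
  proof (rule rho_greatest)
    fix c assume "chain_cost \<delta> D x y c"
    from chain_cost_short_or_large[OF _ this, of L] show "L \<le> c"
      using L(2) that scale_pos by force
  qed
  with L(1) show ?thesis by blast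
qed

lemma rho_eq_D_near_diagonal:
  "\<exists>\<eta>>0. \<eta> \<le> \<delta>0 \<and> (\<forall>x y. dist x y < \<eta> \<longrightarrow> rho \<delta> D x y = D x x y)"
proof -
  obtain L where L: "L > 0" "\<forall>z w. \<delta>/4 \<le> dist z w \<and> dist z w \<le> \<delta> \<longrightarrow> L \<le> D z z w"
    using D_lower_bound_annulus[of "\<delta>/4"] scale_pos by auto
  obtain \<eta> where \<eta>: "\<eta> > 0" "\<forall>x y. dist x y < \<eta> \<longrightarrow> D x x y < L"
    using D_small_near_diagonal[OF L(1)] by auto
  have "rho \<delta> D x y = D x x y" if xy: "dist x y < min \<eta> (\<delta>/4)" for x y
  proof (rule antisym)
    show "rho \<delta> D x y \<le> D x x y"
      using xy scale_pos by (intro rho_le chain_cost.single) auto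
    show "D x x y \<le> rho \<delta> D x y"
    proof (rule rho_greatest)
      fix c assume "chain_cost \<delta> D x y c"
      from chain_cost_short_or_large[OF L(2) this] show "D x x y \<le> c"
        using \<eta>(2) xy by force
    qed
  qed
  moreover have "0 < min \<eta> (\<delta>/4)" "min \<eta> (\<delta>/4) \<le> \<delta>0"
    using \<eta>(1) scale_pos scale_less by auto
  ultimately show ?thesis by blast
qed

lemma rho_small_near_diagonal:
  assumes "0 < e"
  shows "\<exists>r>0. \<forall>x y. dist x y < r \<longrightarrow> rho \<delta> D x y < e"
proof -
  obtain \<eta> where \<eta>: "\<eta> > 0" "\<forall>x y. dist x y < \<eta> \<longrightarrow> rho \<delta> D x y = D x x y"
    using rho_eq_D_near_diagonal by auto
  obtain \<eta>' where \<eta>': "\<eta>' > 0" "\<forall>x y. dist x y < \<eta>' \<longrightarrow> D x x y < e"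
    using D_small_near_diagonal[OF assms] by auto
  show ?thesis
    using \<eta> \<eta>' by (intro exI[of _ "min \<eta> \<eta>'"]) auto
qed

lemma rho_is_metric: "is_metric_on UNIV (rho \<delta> D)"
proof -
  have "rho \<delta> D x y \<noteq> 0" if "x \<noteq> y" for x y
  proof -
    have "0 < dist x y" using \<open>x \<noteq> y\<close> by simp
    then obtain e where "e > 0" "\<forall>x' y'. dist x y \<le> dist x' y' \<longrightarrow> e \<le> rho \<delta> D x' y'"
      using rho_bounded_below by blast
    then show ?thesis by fastforce
  qed
  then have "rho \<delta> D x y = 0 \<longleftrightarrow> x = y" for x y
    using rho_self by blast
  then show ?thesis
    unfolding is_metric_on_def by (simp add: rho_nonneg rho_triangle rho_commute[of x y for x y])
qed

lemma rho_defines_topology: "metric_defining_topology (rho \<delta> D)"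
  unfolding metric_defining_topology_def
proof (intro conjI allI rho_is_metric iffI ballI)
  fix U :: "'a set" and x assume "open U" "x \<in> U"
  then obtain r where r: "r > 0" "\<forall>y. dist y x < r \<longrightarrow> y \<in> U" unfolding open_dist by blast
  obtain e where e: "e > 0" "\<forall>x y. r \<le> dist x y \<longrightarrow> e \<le> rho \<delta> D x y"
    using rho_bounded_below[OF r(1)] by auto
  have "y \<in> U" if "rho \<delta> D x y < e" for y
    using e(2)[rule_format, of x y] r(2)[rule_format, of y] that by (force simp: dist_commute)
  with e(1) show "\<exists>e>0. \<forall>y. rho \<delta> D x y < e \<longrightarrow> y \<in> U" by blast
next
  fix U :: "'a set" assume U: "\<forall>x\<in>U. \<exists>e>0. \<forall>y. rho \<delta> D x y < e \<longrightarrow> y \<in> U"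
  show "open U" unfolding open_dist
  proof
    fix x assume "x \<in> U"
    then obtain e where e: "e > 0" "\<forall>y. rho \<delta> D x y < e \<longrightarrow> y \<in> U" using U by blast
    obtain r where "r > 0" "\<forall>x y. dist x y < r \<longrightarrow> rho \<delta> D x y < e"
      using rho_small_near_diagonal[OF e(1)] by auto
    with e(2) show "\<exists>r>0. \<forall>y. dist y x < r \<longrightarrow> y \<in> U"
      by (auto simp: dist_commute)
  qed
qed

end

lemma catenary_metric_if_locally_eq:
  fixes f g :: "'a::metric_space \<Rightarrow> 'a"
  assumes "metric_defining_topology r" "catenary_local \<delta>0 f g D"
    and "uniformly_continuous_on UNIV f" "uniformly_continuous_on UNIV g"
    and "0 < \<eta>" "\<eta> \<le> \<delta>0" "\<forall>x y. dist x y < \<eta> \<longrightarrow> r x y = D x x y"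
  shows "catenary_metric f g r"
proof -
  obtain df where df: "df > 0" "\<forall>x y. dist x y < df \<longrightarrow> dist (f x) (f y) < \<eta>"
    using assms(3,5) unfolding uniformly_continuous_on_def by (metis UNIV_I dist_commute)
  obtain dg where dg: "dg > 0" "\<forall>x y. dist x y < dg \<longrightarrow> dist (g x) (g y) < \<eta>"
    using assms(4,5) unfolding uniformly_continuous_on_def by (metis UNIV_I dist_commute)
  define \<delta>' where "\<delta>' = min \<eta> (min df dg) / 2"
  have "r (f x) (f y) - 2 * r x y + r (g x) (g y) = r x y" if "dist x y \<le> \<delta>'" for x y
  proof -
    have "dist x y < \<eta>" "dist (f x) (f y) < \<eta>" "dist (g x) (g y) < \<eta>"
      using that df dg assms(5) unfolding \<delta>'_def by auto
    moreover have "D (f x) (f x) (f y) - 2 * D x x y + D (g x) (g x) (g y) = D x x y"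
      using assms(2)[unfolded catenary_local_def, rule_format, of x x y] assms(5,6) calculation
      unfolding triples_def by simp
    ultimately show ?thesis using assms(7) by simp
  qed
  moreover have "\<delta>' > 0" unfolding \<delta>'_def using assms(5) df dg by simp
  ultimately show ?thesis using assms(1) unfolding catenary_metric_def by blast
qed

theorem mainTheorem20:
  fixes f g :: "'a::metric_space \<Rightarrow> 'a"
    and D :: "'a \<Rightarrow> 'a \<Rightarrow> 'a \<Rightarrow> real"
    and \<delta>0 \<delta> :: real
  assumes "compact (UNIV :: 'a set)"
    and "connected (UNIV :: 'a set)"
    and "homeomorphism UNIV UNIV f g"
    and "local_metric \<delta>0 D"
    and "catenary_local \<delta>0 f g D"
    and "0 < \<delta>" and "\<delta> < \<delta>0"
    and "locally_minimizing \<delta> D"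
  shows "catenary_metric f g (rho \<delta> D)"
proof -
  interpret chain_metric_space D \<delta>0 \<delta>
    using assms by unfold_locales auto
  obtain \<eta> where "\<eta> > 0" "\<eta> \<le> \<delta>0" "\<forall>x y. dist x y < \<eta> \<longrightarrow> rho \<delta> D x y = D x x y"
    using rho_eq_D_near_diagonal by auto
  moreover have "uniformly_continuous_on UNIV f" "uniformly_continuous_on UNIV g"
    using assms(1,3) unfolding homeomorphism_def by (auto intro: compact_uniformly_continuous)
  ultimately show ?thesis
    using catenary_metric_if_locally_eq[OF rho_defines_topology assms(5)] by blast
qed

end
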